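(* Let $\overrightarrow{W}$ be a Morse sequence on a simplicial complex $K$. Then for every $p$, $\widehat{\partial}_p\circ\widehat{\partial}_{p+1}=0$ and $\widehat{\delta}_{p+1}\circ\widehat{\delta}_p=0$.
   Context: A simplicial complex $K$ is a finite collection of non-empty finite sets closed under taking non-empty subsets; $\dim\sigma=|\sigma|-1$, $K^{(p)}$ the set of $p$-simplices. A pair $(\sigma,\tau)$ with $\sigma\subsetneq\tau$ is a free pair for $K$ if $\tau$ is the only simplex other than $\sigma$ containing $\sigma$; $K$ is then an elementary expansion of $K\setminus\{\sigma,\tau\}$. If $\nu$ is a facet (maximal simplex) of $K$, $K$ is an elementary filling of $K\setminus\{\nu\}$. A Morse sequence on $K$ is a sequence $\langle\emptyset=K_0,\dots,K_k=K\rangle$ with each $K_i$ an elementary expansion or filling of $K_{i-1}$; simplices added by fillings are critical; for an expansion $K_i=K_{i-1}\cup\{\sigma,\tau\}$, $\sigma\subset\tau$, $(\sigma,\tau)$ is a regular pair, $\sigma$ lower regular, $\tau$ upper regular. $\widehat W$ is the set of critical simplices. $K[p]$ is the $\mathbb{Z}_2$-vector space of subsets of $K^{(p)}$ (sum = symmetric difference, $0=\emptyset$), $\widehat W[p]=\{c\in K[p]:c\subseteq\widehat W\}$. For $\sigma\in K^{(p)}$, $\partial(\sigma)=\{\tau\in K^{(p-1)}:\tau\subset\sigma\}$, $\delta(\sigma)=\{\tau\in K^{(p+1)}:\sigma\subset\tau\}$, with linear extensions $\partial_p,\delta_p$. The reference map $\curlywedge$ is the unique map assigning to each $p$-simplex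 an element of $\widehat W[p]$, extended linearly, with $\curlywedge(\nu)=\{\nu\}$ for critical $\nu$ and $\curlywedge(\tau)=0=\curlywedge(\partial(\tau))$ for upper regular $\tau$; the coreference map $\curlyvee$ is the unique such map with $\curlyvee(\nu)=\{\nu\}$ for critical $\nu$ and $\curlyvee(\sigma)=0=\curlyvee(\delta(\sigma))$ for lower regular $\sigma$. The linear maps $\widehat\partial_p:\widehat W[p]\to\widehat W[p-1]$ and $\widehat\delta_p:\widehat W[p]\to\widehat W[p+1]$ are $\widehat\partial_p(c)=\curlywedge(\partial_p(c))$, $\widehat\delta_p(c)=\curlyvee(\delta_p(c))$. *)

theory Defs
  imports Main
begin

text \<open>Simplices are finite non-empty sets of vertices; a simplex of dimension p has p+1 vertices.
  Chains over Z2 are represented as sets of simplices (sum = symmetric difference).\<close>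

definition simplicial_complex :: "'v set set \<Rightarrow> bool" where
  "simplicial_complex K \<longleftrightarrow> finite K \<and> (\<forall>s\<in>K. finite s \<and> s \<noteq> {}) \<and>
     (\<forall>s\<in>K. \<forall>t. t \<subseteq> s \<and> t \<noteq> {} \<longrightarrow> t \<in> K)"

definition simplices_of_dim :: "'v set set \<Rightarrow> nat \<Rightarrow> 'v set set" where
  "simplices_of_dim K p = {s \<in> K. card s = p + 1}"

definition free_pair :: "'v set set \<Rightarrow> 'v set \<Rightarrow> 'v set \<Rightarrow> bool" where
  "free_pair K \<sigma> \<tau> \<longleftrightarrow> \<sigma> \<subset> \<tau> \<and> \<sigma> \<in> K \<and> \<tau> \<in> K \<and> (\<forall>\<rho>\<in>K. \<sigma> \<subseteq> \<rho> \<longrightarrow> \<rho> = \<sigma> \<or> \<rho> = \<tau>)"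

definition elem_expansion :: "'v set set \<Rightarrow> 'v set set \<Rightarrow> 'v set \<Rightarrow> 'v set \<Rightarrow> bool" where
  "elem_expansion K' K \<sigma> \<tau> \<longleftrightarrow> simplicial_complex K' \<and> free_pair K' \<sigma> \<tau> \<and> K = K' - {\<sigma>, \<tau>}"

definition elem_filling :: "'v set set \<Rightarrow> 'v set set \<Rightarrow> 'v set \<Rightarrow> bool" where
  "elem_filling K' K \<nu> \<longleftrightarrow> simplicial_complex K' \<and> \<nu> \<in> K' \<and> (\<forall>\<rho>\<in>K'. \<nu> \<subseteq> \<rho> \<longrightarrow> \<rho> = \<nu>) \<and> K = K' - {\<nu>}"

definition morse_sequence :: "'v set set \<Rightarrow> 'v set set list \<Rightarrow> bool" where
  "morse_sequence K Ks \<longleftrightarrow> Ks \<noteq> [] \<and> Ks ! 0 = {} \<and> last Ks = K \<and>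
     (\<forall>i. 0 < i \<and> i < length Ks \<longrightarrow>
        (\<exists>\<sigma> \<tau>. elem_expansion (Ks ! i) (Ks ! (i - 1)) \<sigma> \<tau>) \<or>
        (\<exists>\<nu>. elem_filling (Ks ! i) (Ks ! (i - 1)) \<nu>))"

definition critical :: "'v set set list \<Rightarrow> 'v set \<Rightarrow> bool" where
  "critical Ks \<nu> \<longleftrightarrow> (\<exists>i. 0 < i \<and> i < length Ks \<and> elem_filling (Ks ! i) (Ks ! (i - 1)) \<nu>)"

definition regular_pair :: "'v set set list \<Rightarrow> 'v set \<Rightarrow> 'v set \<Rightarrow> bool" where
  "regular_pair Ks \<sigma> \<tau> \<longleftrightarrow> (\<exists>i. 0 < i \<and> i < length Ks \<and> elem_expansion (Ks ! i) (Ks ! (i - 1)) \<sigma> \<tau>)"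

definition lower_regular :: "'v set set list \<Rightarrow> 'v set \<Rightarrow> bool" where
  "lower_regular Ks \<sigma> \<longleftrightarrow> (\<exists>\<tau>. regular_pair Ks \<sigma> \<tau>)"

definition upper_regular :: "'v set set list \<Rightarrow> 'v set \<Rightarrow> bool" where
  "upper_regular Ks \<tau> \<longleftrightarrow> (\<exists>\<sigma>. regular_pair Ks \<sigma> \<tau>)"

definition critical_set :: "'v set set list \<Rightarrow> 'v set set" where
  "critical_set Ks = {\<nu>. critical Ks \<nu>}"

definition crit_chains :: "'v set set \<Rightarrow> 'v set set list \<Rightarrow> nat \<Rightarrow> 'v set set set" where
  "crit_chains K Ks p = {c. c \<subseteq> simplices_of_dim K p \<and> c \<subseteq> critical_set Ks}"

text \<open>Z2-linear extension of a map from simplices to chains: the sum over sigma in c of f sigma.\<close>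
definition lin_ext :: "('v set \<Rightarrow> 'v set set) \<Rightarrow> 'v set set \<Rightarrow> 'v set set" where
  "lin_ext f c = {\<rho>. odd (card {\<sigma> \<in> c. \<rho> \<in> f \<sigma>})}"

definition bnd :: "'v set set \<Rightarrow> 'v set \<Rightarrow> 'v set set" where
  "bnd K \<sigma> = {\<tau> \<in> K. \<tau> \<subset> \<sigma> \<and> card \<tau> + 1 = card \<sigma>}"

definition cobnd :: "'v set set \<Rightarrow> 'v set \<Rightarrow> 'v set set" where
  "cobnd K \<sigma> = {\<tau> \<in> K. \<sigma> \<subset> \<tau> \<and> card \<tau> = card \<sigma> + 1}"

text \<open>Characterising properties of the reference / coreference maps (maps on simplices of K,
  set to 0 outside K so that uniqueness is meaningful).\<close>
definition is_reference_map :: "'v set set \<Rightarrow> 'v set set list \<Rightarrow> ('v set \<Rightarrow> 'v set set) \<Rightarrow> bool" where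
  "is_reference_map K Ks f \<longleftrightarrow>
     (\<forall>\<sigma>. \<sigma> \<notin> K \<longrightarrow> f \<sigma> = {}) \<and>
     (\<forall>\<sigma>\<in>K. f \<sigma> \<in> crit_chains K Ks (card \<sigma> - 1)) \<and>
     (\<forall>\<nu>\<in>K. critical Ks \<nu> \<longrightarrow> f \<nu> = {\<nu>}) \<and>
     (\<forall>\<tau>\<in>K. upper_regular Ks \<tau> \<longrightarrow> f \<tau> = {} \<and> lin_ext f (bnd K \<tau>) = {})"

definition is_coreference_map :: "'v set set \<Rightarrow> 'v set set list \<Rightarrow> ('v set \<Rightarrow> 'v set set) \<Rightarrow> bool" where
  "is_coreference_map K Ks f \<longleftrightarrow>
     (\<forall>\<sigma>. \<sigma> \<notin> K \<longrightarrow> f \<sigma> = {}) \<and>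
     (\<forall>\<sigma>\<in>K. f \<sigma> \<in> crit_chains K Ks (card \<sigma> - 1)) \<and>
     (\<forall>\<nu>\<in>K. critical Ks \<nu> \<longrightarrow> f \<nu> = {\<nu>}) \<and>
     (\<forall>\<sigma>\<in>K. lower_regular Ks \<sigma> \<longrightarrow> f \<sigma> = {} \<and> lin_ext f (cobnd K \<sigma>) = {})"

definition reference_map :: "'v set set \<Rightarrow> 'v set set list \<Rightarrow> 'v set \<Rightarrow> 'v set set" where
  "reference_map K Ks = (THE f. is_reference_map K Ks f)"

definition coreference_map :: "'v set set \<Rightarrow> 'v set set list \<Rightarrow> 'v set \<Rightarrow> 'v set set" where
  "coreference_map K Ks = (THE f. is_coreference_map K Ks f)"

text \<open>Morse boundary and coboundary on critical chains (the dimension index is implicit in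
  the domain \<open>crit_chains K Ks p\<close>).\<close>
definition morse_bnd :: "'v set set \<Rightarrow> 'v set set list \<Rightarrow> 'v set set \<Rightarrow> 'v set set" where
  "morse_bnd K Ks c = lin_ext (reference_map K Ks) (lin_ext (bnd K) c)"

definition morse_cobnd :: "'v set set \<Rightarrow> 'v set set list \<Rightarrow> 'v set set \<Rightarrow> 'v set set" where
  "morse_cobnd K Ks c = lin_ext (coreference_map K Ks) (lin_ext (cobnd K) c)"

end

theory Submission
  imports Defs
begin

(* Both identities are instances of one fact about a Z2-differential d on a finite basis K
  (d o d = 0) equipped with a matching M: M z s pairs z with some s in d z such that every other
  element of d z has a strictly smaller level than s.  The reference map f is the unique map
  that fixes the unmatched (critical) elements, kills every matched z and annihilates d z;
  the last condition reads f s = f (d z - {s}) and so defines f by recursion on the level.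
  Induction on the level gives f d f = f d on basis elements, hence f d f d = f d d = 0.
  For the Morse boundary the matching pairs the upper simplex tau of a regular pair (sigma, tau)
  with sigma, the level being the index at which a simplex enters the Morse sequence; for the
  coboundary it pairs sigma with tau, the level being that index reversed. *)

section \<open>Linear extension over Z2\<close>

lemma lin_ext_empty [simp]: "lin_ext f {} = {}"
  by (simp add: lin_ext_def)

lemma lin_ext_singleton [simp]: "lin_ext f {x} = f x"
proof -
  have "{y \<in> {x}. \<rho> \<in> f y} = (if \<rho> \<in> f x then {x} else {})" for \<rho>
    by auto
  then show ?thesis
    by (auto simp: lin_ext_def)
qed

lemma lin_ext_subset_UN: "lin_ext f c \<subseteq> (\<Union>x\<in>c. f x)"
proof
  fix \<rho> assume "\<rho> \<in> lin_ext f c"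
  then have "{x \<in> c. \<rho> \<in> f x} \<noteq> {}"
    unfolding lin_ext_def by (auto dest: odd_card_imp_not_empty)
  then show "\<rho> \<in> (\<Union>x\<in>c. f x)"
    by blast
qed

lemma finite_lin_ext: "finite c \<Longrightarrow> (\<And>x. x \<in> c \<Longrightarrow> finite (f x)) \<Longrightarrow> finite (lin_ext f c)"
  by (rule finite_subset[OF lin_ext_subset_UN]) auto

lemma lin_ext_cong:
  assumes "\<And>x. x \<in> c \<Longrightarrow> f x = g x"
  shows "lin_ext f c = lin_ext g c"
proof -
  have "{x \<in> c. \<rho> \<in> f x} = {x \<in> c. \<rho> \<in> g x}" for \<rho>
    using assms by auto
  then show ?thesis
    by (simp add: lin_ext_def)
qed

lemma lin_ext_eq_emptyI: "(\<And>x. x \<in> c \<Longrightarrow> f x = {}) \<Longrightarrow> lin_ext f c = {}"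
  using lin_ext_subset_UN[of f c] by auto

lemma lin_ext_insert:
  assumes "finite c" "a \<notin> c"
  shows "lin_ext f (insert a c) = sym_diff (f a) (lin_ext f c)"
proof (rule set_eqI)
  fix \<rho>
  have "{x \<in> insert a c. \<rho> \<in> f x} =
      (if \<rho> \<in> f a then insert a {x \<in> c. \<rho> \<in> f x} else {x \<in> c. \<rho> \<in> f x})"
    by auto
  moreover have "finite {x \<in> c. \<rho> \<in> f x}" "a \<notin> {x \<in> c. \<rho> \<in> f x}"
    using assms by auto
  ultimately show "\<rho> \<in> lin_ext f (insert a c) \<longleftrightarrow> \<rho> \<in> sym_diff (f a) (lin_ext f c)"
    unfolding lin_ext_def by auto
qed

lemma lin_ext_remove:
  assumes "finite c" "a \<in> c"
  shows "lin_ext f c = sym_diff (f a) (lin_ext f (c - {a}))"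
  using lin_ext_insert[of "c - {a}" a f] assms by (simp add: insert_absorb)

lemma lin_ext_eq_empty_iff_remove:
  assumes "finite c" "a \<in> c"
  shows "lin_ext f c = {} \<longleftrightarrow> f a = lin_ext f (c - {a})"
  using lin_ext_remove[OF assms, of f] by blast

lemma lin_ext_sym_diff:
  assumes "finite A" "finite B"
  shows "lin_ext f (sym_diff A B) = sym_diff (lin_ext f A) (lin_ext f B)"
proof (rule set_eqI)
  fix \<rho>
  define P where "P = {x \<in> A. \<rho> \<in> f x}"
  define Q where "Q = {x \<in> B. \<rho> \<in> f x}"
  have "finite P" "finite Q"
    using assms by (simp_all add: P_def Q_def)
  then have "card (sym_diff P Q) = card (P - Q) + card (Q - P)"
    by (intro card_Un_disjoint) auto
  then have "card (sym_diff P Q) + 2 * card (P \<inter> Q) = card P + card Q"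
    using card_Int_Diff[of P Q] card_Int_Diff[of Q P] \<open>finite P\<close> \<open>finite Q\<close>
    by (simp add: Int_commute)
  then have "odd (card (sym_diff P Q)) \<longleftrightarrow> odd (card P) \<noteq> odd (card Q)"
    by presburger
  moreover have "{x \<in> sym_diff A B. \<rho> \<in> f x} = sym_diff P Q"
    by (auto simp: P_def Q_def)
  ultimately show "\<rho> \<in> lin_ext f (sym_diff A B) \<longleftrightarrow> \<rho> \<in> sym_diff (lin_ext f A) (lin_ext f B)"
    unfolding lin_ext_def P_def Q_def by auto
qed

lemma lin_ext_lin_ext:
  assumes "finite c" "\<And>x. x \<in> c \<Longrightarrow> finite (g x)"
  shows "lin_ext f (lin_ext g c) = lin_ext (\<lambda>x. lin_ext f (g x)) c"
  using assms
proof (induction c rule: finite_induct)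
  case (insert a c)
  have "finite (lin_ext g c)"
    using insert by (intro finite_lin_ext) auto
  then show ?case
    using insert by (simp add: lin_ext_insert lin_ext_sym_diff)
qed simp

lemma lin_ext_lin_ext_lin_ext:
  assumes "finite c" "\<And>x. x \<in> c \<Longrightarrow> finite (h x)"
    and "\<And>x y. x \<in> c \<Longrightarrow> y \<in> h x \<Longrightarrow> finite (g y)"
  shows "lin_ext f (lin_ext g (lin_ext h c)) = lin_ext (\<lambda>x. lin_ext f (lin_ext g (h x))) c"
proof -
  have "lin_ext f (lin_ext g (lin_ext h c)) = lin_ext f (lin_ext (\<lambda>x. lin_ext g (h x)) c)"
    using assms(1,2) by (simp add: lin_ext_lin_ext)
  also have "\<dots> = lin_ext (\<lambda>x. lin_ext f (lin_ext g (h x))) c"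
    using assms by (intro lin_ext_lin_ext finite_lin_ext) auto
  finally show ?thesis .
qed

section \<open>Faces in a simplicial complex\<close>

lemma simplicial_complex_face:
  "simplicial_complex K \<Longrightarrow> \<sigma> \<in> K \<Longrightarrow> \<tau> \<subseteq> \<sigma> \<Longrightarrow> \<tau> \<noteq> {} \<Longrightarrow> \<tau> \<in> K"
  unfolding simplicial_complex_def by blast

lemma simplicial_complex_finite_simplex:
  "simplicial_complex K \<Longrightarrow> \<sigma> \<in> K \<Longrightarrow> finite \<sigma>"
  unfolding simplicial_complex_def by blast

lemma card_faces_between:
  assumes K: "simplicial_complex K" and "\<sigma> \<in> K" "\<rho> \<subseteq> \<sigma>" "card \<sigma> = card \<rho> + 2"
  shows "card {\<tau> \<in> K. \<rho> \<subset> \<tau> \<and> \<tau> \<subset> \<sigma> \<and> card \<tau> = card \<rho> + 1} = 2"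
proof -
  have "finite \<rho>"
    using simplicial_complex_finite_simplex[OF K \<open>\<sigma> \<in> K\<close>] \<open>\<rho> \<subseteq> \<sigma>\<close> finite_subset by blast
  have "{\<tau> \<in> K. \<rho> \<subset> \<tau> \<and> \<tau> \<subset> \<sigma> \<and> card \<tau> = card \<rho> + 1} = (\<lambda>x. insert x \<rho>) ` (\<sigma> - \<rho>)"
  proof (intro equalityI subsetI)
    fix \<tau> assume \<tau>: "\<tau> \<in> {\<tau> \<in> K. \<rho> \<subset> \<tau> \<and> \<tau> \<subset> \<sigma> \<and> card \<tau> = card \<rho> + 1}"
    then have "card (\<tau> - \<rho>) = 1"
      using \<open>finite \<rho>\<close> card_Diff_subset[of \<rho> \<tau>] by auto
    then obtain x where "\<tau> - \<rho> = {x}"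
      by (auto simp: card_1_singleton_iff)
    then have "\<tau> = insert x \<rho>" "x \<in> \<sigma> - \<rho>"
      using \<tau> by auto
    then show "\<tau> \<in> (\<lambda>x. insert x \<rho>) ` (\<sigma> - \<rho>)"
      by blast
  next
    fix \<tau> assume "\<tau> \<in> (\<lambda>x. insert x \<rho>) ` (\<sigma> - \<rho>)"
    then obtain x where x: "x \<in> \<sigma>" "x \<notin> \<rho>" and \<tau>: "\<tau> = insert x \<rho>"
      by blast
    have "card \<tau> = card \<rho> + 1"
      using x \<tau> \<open>finite \<rho>\<close> by simp
    moreover have "\<tau> \<subseteq> \<sigma>"
      using x \<tau> \<open>\<rho> \<subseteq> \<sigma>\<close> by blast
    moreover have "\<tau> \<in> K"
      using simplicial_complex_face[OF K \<open>\<sigma> \<in> K\<close> \<open>\<tau> \<subseteq> \<sigma>\<close>] \<tau> by blast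
    ultimately show "\<tau> \<in> {\<tau> \<in> K. \<rho> \<subset> \<tau> \<and> \<tau> \<subset> \<sigma> \<and> card \<tau> = card \<rho> + 1}"
      using x \<tau> \<open>card \<sigma> = card \<rho> + 2\<close> by auto
  qed
  moreover have "card ((\<lambda>x. insert x \<rho>) ` (\<sigma> - \<rho>)) = card (\<sigma> - \<rho>)"
    by (rule card_image) (auto simp: inj_on_def)
  ultimately show ?thesis
    using assms \<open>finite \<rho>\<close> by (simp add: card_Diff_subset)
qed

lemma lin_ext_bnd_bnd:
  assumes K: "simplicial_complex K" and "\<sigma> \<in> K"
  shows "lin_ext (bnd K) (bnd K \<sigma>) = {}"
proof -
  have "even (card {\<tau> \<in> bnd K \<sigma>. \<rho> \<in> bnd K \<tau>})" for \<rho>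
  proof (cases "\<exists>\<tau> \<in> bnd K \<sigma>. \<rho> \<in> bnd K \<tau>")
    case True
    then have "\<rho> \<in> K" "\<rho> \<subseteq> \<sigma>" "card \<sigma> = card \<rho> + 2"
      by (auto simp: bnd_def)
    moreover have "{\<tau> \<in> bnd K \<sigma>. \<rho> \<in> bnd K \<tau>} = {\<tau> \<in> K. \<rho> \<subset> \<tau> \<and> \<tau> \<subset> \<sigma> \<and> card \<tau> = card \<rho> + 1}"
      using calculation by (auto simp: bnd_def)
    ultimately show ?thesis
      using card_faces_between[OF K \<open>\<sigma> \<in> K\<close>] by simp
  next
    case False
    then have "{\<tau> \<in> bnd K \<sigma>. \<rho> \<in> bnd K \<tau>} = {}"
      by blast
    then show ?thesis
      by (simp only: card.empty even_zero)
  qed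
  then show ?thesis
    by (simp add: lin_ext_def)
qed

lemma lin_ext_cobnd_cobnd:
  assumes K: "simplicial_complex K" and "\<sigma> \<in> K"
  shows "lin_ext (cobnd K) (cobnd K \<sigma>) = {}"
proof -
  have "even (card {\<tau> \<in> cobnd K \<sigma>. \<rho> \<in> cobnd K \<tau>})" for \<rho>
  proof (cases "\<exists>\<tau> \<in> cobnd K \<sigma>. \<rho> \<in> cobnd K \<tau>")
    case True
    then have "\<rho> \<in> K" "\<sigma> \<subseteq> \<rho>" "card \<rho> = card \<sigma> + 2"
      by (auto simp: cobnd_def)
    moreover have "{\<tau> \<in> cobnd K \<sigma>. \<rho> \<in> cobnd K \<tau>} = {\<tau> \<in> K. \<sigma> \<subset> \<tau> \<and> \<tau> \<subset> \<rho> \<and> card \<tau> = card \<sigma> + 1}"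
      using calculation by (auto simp: cobnd_def)
    ultimately show ?thesis
      using card_faces_between[OF K, of \<rho> \<sigma>] by simp
  next
    case False
    then have "{\<tau> \<in> cobnd K \<sigma>. \<rho> \<in> cobnd K \<tau>} = {}"
      by blast
    then show ?thesis
      by (simp only: card.empty even_zero)
  qed
  then show ?thesis
    by (simp add: lin_ext_def)
qed

lemma free_pair_card:
  assumes K: "simplicial_complex K" and "free_pair K \<sigma> \<tau>"
  shows "card \<tau> = card \<sigma> + 1"
proof -
  have "\<sigma> \<subset> \<tau>" "\<tau> \<in> K"
    using assms by (auto simp: free_pair_def)
  then obtain x where x: "x \<in> \<tau>" "x \<notin> \<sigma>"
    by blast
  have "insert x \<sigma> \<in> K"
    using simplicial_complex_face[OF K \<open>\<tau> \<in> K\<close>, of "insert x \<sigma>"] \<open>\<sigma> \<subset> \<tau>\<close> x by blast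
  then have "\<tau> = insert x \<sigma>"
    using assms x unfolding free_pair_def by blast
  moreover have "finite \<tau>"
    using simplicial_complex_finite_simplex[OF K \<open>\<tau> \<in> K\<close>] .
  ultimately show ?thesis
    using x by simp
qed

section \<open>Reference maps of an acyclic matching\<close>

locale morse_matching =
  fixes K :: "'a set set" and d :: "'a set \<Rightarrow> 'a set set" and crit :: "'a set \<Rightarrow> bool"
    and M :: "'a set \<Rightarrow> 'a set \<Rightarrow> bool" and lvl :: "'a set \<Rightarrow> nat" and grade :: "'a set \<Rightarrow> nat"
  assumes finite_K: "finite K"
    and d_subset: "x \<in> K \<Longrightarrow> d x \<subseteq> K"
    and lin_ext_d_d: "x \<in> K \<Longrightarrow> lin_ext d (d x) = {}"
    and cell_cases: "x \<in> K \<Longrightarrow> crit x \<or> (\<exists>s. M x s) \<or> (\<exists>z. M z x)"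
    and matched_in_K: "M z s \<Longrightarrow> z \<in> K"
    and matched_in_d: "M z s \<Longrightarrow> s \<in> d z"
    and lvl_less: "M z s \<Longrightarrow> y \<in> d z \<Longrightarrow> y \<noteq> s \<Longrightarrow> lvl y < lvl s"
    and grade_eq: "M z s \<Longrightarrow> y \<in> d z \<Longrightarrow> grade y = grade s"
    and matched_not_crit: "M z s \<Longrightarrow> \<not> crit z \<and> \<not> crit s"
    and matched_neq: "M z s \<Longrightarrow> z \<noteq> s"
    and matched_unique: "M z s \<Longrightarrow> M z' s' \<Longrightarrow> {z, s} \<inter> {z', s'} \<noteq> {} \<Longrightarrow> z = z' \<and> s = s'"
begin

definition is_reference :: "('a set \<Rightarrow> 'a set set) \<Rightarrow> bool" where
  "is_reference f \<longleftrightarrow>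
     (\<forall>x. x \<notin> K \<longrightarrow> f x = {}) \<and>
     (\<forall>x\<in>K. f x \<subseteq> {y \<in> K. crit y \<and> grade y = grade x}) \<and>
     (\<forall>x\<in>K. crit x \<longrightarrow> f x = {x}) \<and>
     (\<forall>z\<in>K. (\<exists>s. M z s) \<longrightarrow> f z = {} \<and> lin_ext f (d z) = {})"

lemma finite_d: "x \<in> K \<Longrightarrow> finite (d x)"
  using d_subset finite_K finite_subset by blast

lemma the_matched_upper: "M z s \<Longrightarrow> (THE z. M z s) = z"
proof (rule the_equality)
  fix z' assume "M z s" "M z' s"
  then show "z' = z"
    using matched_unique[of z' s z s] by simp
qed

lemma upper_not_matched_lower: "M z s \<Longrightarrow> \<not> M z' z"
  using matched_unique[of z s z' z] matched_neq by auto

lemma is_reference_outside: "is_reference f \<Longrightarrow> x \<notin> K \<Longrightarrow> f x = {}"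
  by (simp add: is_reference_def)

lemma is_reference_crit: "is_reference f \<Longrightarrow> x \<in> K \<Longrightarrow> crit x \<Longrightarrow> f x = {x}"
  by (simp add: is_reference_def)

lemma is_reference_matched_upper:
  assumes "is_reference f" "M z s"
  shows "f z = {}"
  using assms matched_in_K[OF assms(2)] by (auto simp: is_reference_def)

lemma is_reference_matched:
  assumes "is_reference f" "M z s"
  shows "f s = lin_ext f (d z - {s})"
proof -
  have "z \<in> K"
    using assms(2) by (rule matched_in_K)
  then have "lin_ext f (d z) = {}"
    using assms by (auto simp: is_reference_def)
  then show ?thesis
    using lin_ext_eq_empty_iff_remove[OF finite_d[OF \<open>z \<in> K\<close>] matched_in_d[OF assms(2)]] by simp
qed

definition reference_step :: "('a set \<Rightarrow> 'a set set) \<Rightarrow> 'a set \<Rightarrow> 'a set set" where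
  "reference_step f x =
     (if x \<in> K \<and> crit x then {x}
      else if \<exists>z. M z x then lin_ext f (d (THE z. M z x) - {x})
      else {})"

definition reference :: "'a set \<Rightarrow> 'a set set" where
  "reference = wfrec (measure lvl) reference_step"

lemma reference_unfold: "reference x = reference_step reference x"
proof -
  have "adm_wf (measure lvl) reference_step"
    unfolding adm_wf_def
  proof (intro allI impI)
    fix f g :: "'a set \<Rightarrow> 'a set set" and x
    assume eq: "\<forall>y. (y, x) \<in> measure lvl \<longrightarrow> f y = g y"
    show "reference_step f x = reference_step g x"
    proof (cases "\<exists>z. M z x")
      case True
      then obtain z where "M z x"
        by blast
      then have "lin_ext f (d z - {x}) = lin_ext g (d z - {x})"
        using eq lvl_less by (intro lin_ext_cong) auto
      then show ?thesis
        using \<open>M z x\<close> by (simp add: reference_step_def the_matched_upper)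
    qed (simp add: reference_step_def)
  qed
  then have "reference = reference_step reference"
    unfolding reference_def by (rule wfrec_fixpoint[OF wf_measure])
  then show ?thesis
    by (rule fun_cong)
qed

lemma reference_crit: "x \<in> K \<Longrightarrow> crit x \<Longrightarrow> reference x = {x}"
  by (subst reference_unfold) (simp add: reference_step_def)

lemma reference_matched_lower:
  assumes "M z s"
  shows "reference s = lin_ext reference (d z - {s})"
proof -
  have "\<not> crit s" "\<exists>z. M z s"
    using assms matched_not_crit by blast+
  then show ?thesis
    by (subst reference_unfold) (simp add: reference_step_def the_matched_upper[OF assms])
qed

lemma reference_matched_upper:
  assumes "M z s"
  shows "reference z = {}"
proof -
  have "\<not> crit z" "\<not> (\<exists>z'. M z' z)"
    using assms matched_not_crit upper_not_matched_lower by blast+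
  then show ?thesis
    by (subst reference_unfold) (simp add: reference_step_def)
qed

lemma reference_outside:
  assumes "x \<notin> K"
  shows "reference x = {}"
proof -
  have "\<not> M z x" for z
    using assms matched_in_K matched_in_d d_subset by blast
  then show ?thesis
    using assms by (subst reference_unfold) (simp add: reference_step_def)
qed

lemma reference_subset: "x \<in> K \<Longrightarrow> reference x \<subseteq> {y \<in> K. crit y \<and> grade y = grade x}"
proof (induction x rule: measure_induct_rule[of lvl])
  case (less x)
  consider "crit x" | s where "M x s" | z where "M z x"
    using cell_cases[OF less.prems] by blast
  then show ?case
  proof cases
    case 3
    have "lin_ext reference (d z - {x}) \<subseteq> (\<Union>y \<in> d z - {x}. reference y)"
      by (rule lin_ext_subset_UN)
    also have "\<dots> \<subseteq> {y \<in> K. crit y \<and> grade y = grade x}"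
      using less.IH lvl_less[OF \<open>M z x\<close>] grade_eq[OF \<open>M z x\<close>] d_subset[OF matched_in_K[OF \<open>M z x\<close>]]
      by fastforce
    finally show ?thesis
      using reference_matched_lower[OF \<open>M z x\<close>] by simp
  qed (simp_all add: less.prems reference_crit reference_matched_upper)
qed

lemma lin_ext_reference_d_matched: "M z s \<Longrightarrow> lin_ext reference (d z) = {}"
  using finite_d[OF matched_in_K] matched_in_d reference_matched_lower
  by (rule lin_ext_eq_empty_iff_remove[THEN iffD2])

lemma is_reference_reference: "is_reference reference"
  unfolding is_reference_def
proof (intro conjI allI ballI impI)
  show "reference x = {}" if "x \<notin> K" for x
    using that by (rule reference_outside)
  show "reference x \<subseteq> {y \<in> K. crit y \<and> grade y = grade x}" if "x \<in> K" for x
    using that by (rule reference_subset)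
  show "reference x = {x}" if "x \<in> K" "crit x" for x
    using that by (rule reference_crit)
  show "reference z = {}" if "\<exists>s. M z s" for z
    using that reference_matched_upper by blast
  show "lin_ext reference (d z) = {}" if "\<exists>s. M z s" for z
    using that lin_ext_reference_d_matched by blast
qed

lemma is_reference_unique:
  assumes "is_reference f"
  shows "f = reference"
proof
  fix x
  show "f x = reference x"
  proof (induction x rule: measure_induct_rule[of lvl])
    case (less x)
    consider "x \<notin> K" | "x \<in> K" "crit x" | s where "M x s" | z where "M z x"
      using cell_cases by blast
    then show ?case
    proof cases
      case 4
      have "f x = lin_ext f (d z - {x})"
        using assms \<open>M z x\<close> by (rule is_reference_matched)
      also have "\<dots> = lin_ext reference (d z - {x})"
        using less.IH lvl_less[OF \<open>M z x\<close>] by (intro lin_ext_cong) auto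
      finally show ?thesis
        using reference_matched_lower[OF \<open>M z x\<close>] by simp
    qed (use assms in \<open>simp_all add: is_reference_outside is_reference_crit
          is_reference_matched_upper reference_outside reference_crit reference_matched_upper\<close>)
  qed
qed

lemma the_is_reference: "(THE f. is_reference f) = reference"
  using is_reference_reference is_reference_unique by blast

lemma reference_subset_K: "reference x \<subseteq> K"
  using reference_subset reference_outside by (cases "x \<in> K") auto

lemma finite_reference: "finite (reference x)"
  using reference_subset_K finite_K by (rule finite_subset)

lemma reference_d_reference:
  "x \<in> K \<Longrightarrow> lin_ext reference (lin_ext d (reference x)) = lin_ext reference (d x)"
proof (induction x rule: measure_induct_rule[of lvl])
  case (less x)
  consider "crit x" | s where "M x s" | z where "M z x"
    using cell_cases[OF less.prems] by blast
  then show ?case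
  proof cases
    case 2
    then show ?thesis
      using reference_matched_upper lin_ext_reference_d_matched by simp
  next
    case 3
    let ?D = "d z - {x}"
    have "z \<in> K"
      using \<open>M z x\<close> by (rule matched_in_K)
    then have "?D \<subseteq> K" "finite ?D"
      using d_subset finite_d by auto
    have "lin_ext reference (lin_ext d (reference x))
        = lin_ext reference (lin_ext d (lin_ext reference ?D))"
      using reference_matched_lower[OF \<open>M z x\<close>] by simp
    also have "\<dots> = lin_ext (\<lambda>y. lin_ext reference (lin_ext d (reference y))) ?D"
      using \<open>finite ?D\<close> finite_reference reference_subset_K finite_d
      by (intro lin_ext_lin_ext_lin_ext) auto
    also have "\<dots> = lin_ext (\<lambda>y. lin_ext reference (d y)) ?D"
      using less.IH lvl_less[OF \<open>M z x\<close>] \<open>?D \<subseteq> K\<close> by (intro lin_ext_cong) auto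
    also have "\<dots> = lin_ext reference (lin_ext d ?D)"
      using \<open>finite ?D\<close> \<open>?D \<subseteq> K\<close> finite_d by (intro lin_ext_lin_ext[symmetric]) auto
    also have "lin_ext d ?D = d x"
      using lin_ext_eq_empty_iff_remove[OF finite_d[OF \<open>z \<in> K\<close>] matched_in_d[OF \<open>M z x\<close>]]
        lin_ext_d_d[OF \<open>z \<in> K\<close>] by simp
    finally show ?thesis .
  qed (simp add: less.prems reference_crit)
qed

lemma reference_d_reference_d:
  assumes "c \<subseteq> K"
  shows "lin_ext reference (lin_ext d (lin_ext reference (lin_ext d c))) = {}"
proof -
  let ?E = "lin_ext d c"
  have "finite c"
    using assms finite_K finite_subset by blast
  then have "finite ?E"
    using assms finite_d by (intro finite_lin_ext) auto
  have "?E \<subseteq> K"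
    using assms lin_ext_subset_UN[of d c] d_subset by blast
  have "lin_ext reference (lin_ext d (lin_ext reference ?E))
      = lin_ext (\<lambda>y. lin_ext reference (lin_ext d (reference y))) ?E"
    using \<open>finite ?E\<close> finite_reference reference_subset_K finite_d
    by (intro lin_ext_lin_ext_lin_ext) auto
  also have "\<dots> = lin_ext (\<lambda>y. lin_ext reference (d y)) ?E"
    using reference_d_reference \<open>?E \<subseteq> K\<close> by (intro lin_ext_cong) auto
  also have "\<dots> = lin_ext reference (lin_ext d ?E)"
    using \<open>finite ?E\<close> \<open>?E \<subseteq> K\<close> finite_d by (intro lin_ext_lin_ext[symmetric]) auto
  also have "lin_ext d ?E = lin_ext (\<lambda>x. lin_ext d (d x)) c"
    using \<open>finite c\<close> assms finite_d by (intro lin_ext_lin_ext) auto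
  also have "\<dots> = {}"
    using assms lin_ext_d_d by (auto intro!: lin_ext_eq_emptyI[of c])
  finally show ?thesis
    by simp
qed

end

section \<open>Regular pairs of a Morse sequence\<close>

definition birth :: "'v set set list \<Rightarrow> 'v set \<Rightarrow> nat" where
  "birth Ks \<sigma> = (LEAST i. \<sigma> \<in> Ks ! i)"

context
  fixes K :: "'v set set" and Ks :: "'v set set list"
  assumes morse: "morse_sequence K Ks"
begin

lemma morse_step:
  "0 < i \<Longrightarrow> i < length Ks \<Longrightarrow>
    (\<exists>\<sigma> \<tau>. elem_expansion (Ks ! i) (Ks ! (i - 1)) \<sigma> \<tau>) \<or> (\<exists>\<nu>. elem_filling (Ks ! i) (Ks ! (i - 1)) \<nu>)"
  using morse unfolding morse_sequence_def by blast

lemma simplicial_complex_nth: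
  assumes "i < length Ks"
  shows "simplicial_complex (Ks ! i)"
proof (cases "i = 0")
  case True
  then show ?thesis
    using morse by (simp add: morse_sequence_def simplicial_complex_def)
next
  case False
  then show ?thesis
    using morse_step[of i] assms unfolding elem_expansion_def elem_filling_def by blast
qed

lemma nth_mono: "i \<le> j \<Longrightarrow> j < length Ks \<Longrightarrow> Ks ! i \<subseteq> Ks ! j"
proof (induction j)
  case (Suc j)
  have "Ks ! j \<subseteq> Ks ! Suc j"
    using morse_step[of "Suc j"] Suc.prems unfolding elem_expansion_def elem_filling_def by fastforce
  then show ?case
    using Suc by (cases "i = Suc j") auto
qed simp

lemma length_pos: "0 < length Ks"
  using morse by (simp add: morse_sequence_def)

lemma nth_last: "Ks ! (length Ks - 1) = K"
proof -
  have "Ks \<noteq> []" "last Ks = K"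
    using morse by (simp_all add: morse_sequence_def)
  then show ?thesis
    by (simp add: last_conv_nth)
qed

lemma simplicial_complex_K: "simplicial_complex K"
  using simplicial_complex_nth[of "length Ks - 1"] length_pos nth_last by simp

lemma nth_subset: "i < length Ks \<Longrightarrow> Ks ! i \<subseteq> K"
  using nth_mono[of i "length Ks - 1"] nth_last by simp

lemma birth_step:
  assumes "\<sigma> \<in> K"
  shows "\<sigma> \<in> Ks ! birth Ks \<sigma>" "0 < birth Ks \<sigma>" "birth Ks \<sigma> < length Ks"
proof -
  have last: "\<sigma> \<in> Ks ! (length Ks - 1)"
    using assms nth_last by simp
  then show mem: "\<sigma> \<in> Ks ! birth Ks \<sigma>"
    unfolding birth_def by (rule LeastI)
  have "Ks ! 0 = {}"
    using morse by (simp add: morse_sequence_def)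
  then show "0 < birth Ks \<sigma>"
    using mem by (cases "birth Ks \<sigma>") auto
  have "birth Ks \<sigma> \<le> length Ks - 1"
    unfolding birth_def using last by (rule Least_le)
  then show "birth Ks \<sigma> < length Ks"
    using length_pos by linarith
qed

lemma mem_nth_iff_birth_le:
  assumes "\<sigma> \<in> K" "j < length Ks"
  shows "\<sigma> \<in> Ks ! j \<longleftrightarrow> birth Ks \<sigma> \<le> j"
proof
  assume "\<sigma> \<in> Ks ! j"
  then show "birth Ks \<sigma> \<le> j"
    unfolding birth_def by (rule Least_le)
next
  assume "birth Ks \<sigma> \<le> j"
  then show "\<sigma> \<in> Ks ! j"
    using nth_mono[OF _ assms(2)] birth_step(1)[OF assms(1)] by blast
qed

lemma birth_eqI:
  assumes "0 < i" "i < length Ks" "\<sigma> \<in> Ks ! i" "\<sigma> \<notin> Ks ! (i - 1)"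
  shows "birth Ks \<sigma> = i"
proof -
  have "\<sigma> \<in> K"
    using assms nth_subset by blast
  then have "birth Ks \<sigma> \<le> i" "\<not> birth Ks \<sigma> \<le> i - 1"
    using assms mem_nth_iff_birth_le[of \<sigma>] by auto
  then show ?thesis
    by linarith
qed

lemma regular_pair_step:
  assumes "regular_pair Ks \<sigma> \<tau>"
  obtains i where "0 < i" "i < length Ks" "simplicial_complex (Ks ! i)" "free_pair (Ks ! i) \<sigma> \<tau>"
    "Ks ! (i - 1) = Ks ! i - {\<sigma>, \<tau>}" "birth Ks \<sigma> = i" "birth Ks \<tau> = i"
proof -
  obtain i where i: "0 < i" "i < length Ks" "elem_expansion (Ks ! i) (Ks ! (i - 1)) \<sigma> \<tau>"
    using assms unfolding regular_pair_def by blast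
  then have step: "simplicial_complex (Ks ! i)" "free_pair (Ks ! i) \<sigma> \<tau>" "Ks ! (i - 1) = Ks ! i - {\<sigma>, \<tau>}"
    unfolding elem_expansion_def by auto
  then have "\<sigma> \<in> Ks ! i" "\<tau> \<in> Ks ! i"
    unfolding free_pair_def by auto
  then have "birth Ks \<sigma> = i" "birth Ks \<tau> = i"
    using birth_eqI[OF i(1,2)] step(3) by simp_all
  with i(1,2) step show ?thesis
    by (rule that)
qed

lemma critical_step:
  assumes "critical Ks \<nu>"
  obtains i where "0 < i" "i < length Ks" "\<nu> \<in> Ks ! i" "Ks ! (i - 1) = Ks ! i - {\<nu>}" "birth Ks \<nu> = i"
proof -
  obtain i where i: "0 < i" "i < length Ks" "elem_filling (Ks ! i) (Ks ! (i - 1)) \<nu>"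
    using assms unfolding critical_def by blast
  then have step: "\<nu> \<in> Ks ! i" "Ks ! (i - 1) = Ks ! i - {\<nu>}"
    unfolding elem_filling_def by auto
  then have "birth Ks \<nu> = i"
    using birth_eqI[OF i(1,2)] by simp
  with i(1,2) step show ?thesis
    by (rule that)
qed

lemma regular_pair_simplices:
  assumes "regular_pair Ks \<sigma> \<tau>"
  shows "\<sigma> \<in> K" "\<tau> \<in> K" "\<sigma> \<subset> \<tau>" "card \<tau> = card \<sigma> + 1"
proof -
  obtain i where i: "i < length Ks" "simplicial_complex (Ks ! i)" "free_pair (Ks ! i) \<sigma> \<tau>"
    using assms by (rule regular_pair_step)
  then show "card \<tau> = card \<sigma> + 1"
    by (intro free_pair_card)
  have "\<sigma> \<in> Ks ! i" "\<tau> \<in> Ks ! i" "\<sigma> \<subset> \<tau>"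
    using i(3) unfolding free_pair_def by auto
  then show "\<sigma> \<in> K" "\<tau> \<in> K" "\<sigma> \<subset> \<tau>"
    using nth_subset[OF i(1)] by auto
qed

lemma critical_not_regular_pair:
  assumes "critical Ks \<nu>" "regular_pair Ks \<sigma> \<tau>"
  shows "\<nu> \<noteq> \<sigma>" "\<nu> \<noteq> \<tau>"
proof -
  obtain i where i: "Ks ! (i - 1) = Ks ! i - {\<nu>}" "birth Ks \<nu> = i"
    using assms(1) by (rule critical_step)
  obtain j where j: "free_pair (Ks ! j) \<sigma> \<tau>" "Ks ! (j - 1) = Ks ! j - {\<sigma>, \<tau>}"
      "birth Ks \<sigma> = j" "birth Ks \<tau> = j"
    using assms(2) by (rule regular_pair_step)
  have "\<nu> \<notin> {\<sigma>, \<tau>}"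
  proof
    assume "\<nu> \<in> {\<sigma>, \<tau>}"
    then have "i = j"
      using i(2) j(3,4) by auto
    then have "Ks ! j - {\<nu>} = Ks ! j - {\<sigma>, \<tau>}"
      using i(1) j(2) by simp
    moreover have "\<sigma> \<in> Ks ! j" "\<tau> \<in> Ks ! j" "\<sigma> \<noteq> \<tau>"
      using j(1) unfolding free_pair_def by auto
    ultimately show False
      by blast
  qed
  then show "\<nu> \<noteq> \<sigma>" "\<nu> \<noteq> \<tau>"
    by auto
qed

lemma regular_pair_unique:
  assumes "regular_pair Ks \<sigma> \<tau>" "regular_pair Ks \<sigma>' \<tau>'" "{\<sigma>, \<tau>} \<inter> {\<sigma>', \<tau>'} \<noteq> {}"
  shows "\<sigma> = \<sigma>' \<and> \<tau> = \<tau>'"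
proof -
  obtain i where i: "free_pair (Ks ! i) \<sigma> \<tau>" "Ks ! (i - 1) = Ks ! i - {\<sigma>, \<tau>}"
      "birth Ks \<sigma> = i" "birth Ks \<tau> = i"
    using assms(1) by (rule regular_pair_step)
  obtain j where j: "free_pair (Ks ! j) \<sigma>' \<tau>'" "Ks ! (j - 1) = Ks ! j - {\<sigma>', \<tau>'}"
      "birth Ks \<sigma>' = j" "birth Ks \<tau>' = j"
    using assms(2) by (rule regular_pair_step)
  have "i = j"
    using assms(3) i(3,4) j(3,4) by auto
  have "{\<sigma>, \<tau>} \<subseteq> Ks ! i" "\<sigma> \<subset> \<tau>"
    using i(1) unfolding free_pair_def by auto
  moreover have "{\<sigma>', \<tau>'} \<subseteq> Ks ! i" "\<sigma>' \<subset> \<tau>'"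
    using j(1) \<open>i = j\<close> unfolding free_pair_def by auto
  moreover have "Ks ! i - {\<sigma>, \<tau>} = Ks ! i - {\<sigma>', \<tau>'}"
    using i(2) j(2) \<open>i = j\<close> by metis
  ultimately have "{\<sigma>, \<tau>} = {\<sigma>', \<tau>'}" "\<sigma> \<subset> \<tau>" "\<sigma>' \<subset> \<tau>'"
    by (metis Diff_Diff_Int inf.absorb_iff2)+
  then show ?thesis
    by (auto simp: doubleton_eq_iff)
qed

lemma simplex_cases:
  assumes "\<sigma> \<in> K"
  shows "critical Ks \<sigma> \<or> lower_regular Ks \<sigma> \<or> upper_regular Ks \<sigma>"
proof -
  define i where "i = birth Ks \<sigma>"
  have i: "0 < i" "i < length Ks" "\<sigma> \<in> Ks ! i"
    using birth_step[OF assms] unfolding i_def by auto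
  then have "\<sigma> \<notin> Ks ! (i - 1)"
    using mem_nth_iff_birth_le[OF assms, of "i - 1"] unfolding i_def by simp
  from morse_step[OF i(1,2)] show ?thesis
  proof (elim disjE exE)
    fix \<rho> \<tau> assume step: "elem_expansion (Ks ! i) (Ks ! (i - 1)) \<rho> \<tau>"
    then have "regular_pair Ks \<rho> \<tau>"
      unfolding regular_pair_def using i(1,2) by blast
    moreover have "\<sigma> = \<rho> \<or> \<sigma> = \<tau>"
      using step i(3) \<open>\<sigma> \<notin> Ks ! (i - 1)\<close> unfolding elem_expansion_def by blast
    ultimately show ?thesis
      unfolding lower_regular_def upper_regular_def by blast
  next
    fix \<nu> assume step: "elem_filling (Ks ! i) (Ks ! (i - 1)) \<nu>"
    then have "critical Ks \<nu>"
      unfolding critical_def using i(1,2) by blast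
    moreover have "\<sigma> = \<nu>"
      using step i(3) \<open>\<sigma> \<notin> Ks ! (i - 1)\<close> unfolding elem_filling_def by blast
    ultimately show ?thesis
      by blast
  qed
qed

lemma birth_face_less:
  assumes "regular_pair Ks \<sigma> \<tau>" "\<rho> \<in> K" "\<rho> \<subset> \<tau>" "\<rho> \<noteq> \<sigma>"
  shows "birth Ks \<rho> < birth Ks \<sigma>"
proof -
  obtain i where i: "0 < i" "i < length Ks" "simplicial_complex (Ks ! i)" "free_pair (Ks ! i) \<sigma> \<tau>"
      "Ks ! (i - 1) = Ks ! i - {\<sigma>, \<tau>}" "birth Ks \<sigma> = i"
    using assms(1) by (rule regular_pair_step)
  have "\<rho> \<noteq> {}"
    using simplicial_complex_K assms(2) by (simp add: simplicial_complex_def)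
  then have "\<rho> \<in> Ks ! i"
    using simplicial_complex_face[OF i(3)] i(4) assms(3) unfolding free_pair_def by blast
  then have "\<rho> \<in> Ks ! (i - 1)"
    using i(5) assms(3,4) by auto
  then have "birth Ks \<rho> \<le> i - 1"
    using mem_nth_iff_birth_le[OF assms(2), of "i - 1"] i(2) by simp
  then show ?thesis
    using i(1,6) by linarith
qed

lemma birth_coface_greater:
  assumes "regular_pair Ks \<sigma> \<tau>" "\<rho> \<in> K" "\<sigma> \<subset> \<rho>" "\<rho> \<noteq> \<tau>"
  shows "birth Ks \<tau> < birth Ks \<rho>"
proof -
  obtain i where i: "i < length Ks" "free_pair (Ks ! i) \<sigma> \<tau>" "birth Ks \<tau> = i"
    using assms(1) by (rule regular_pair_step)
  have "\<rho> \<notin> Ks ! i"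
  proof
    assume "\<rho> \<in> Ks ! i"
    then have "\<rho> = \<sigma> \<or> \<rho> = \<tau>"
      using i(2) assms(3) unfolding free_pair_def by blast
    then show False
      using assms(3,4) by blast
  qed
  then show ?thesis
    using mem_nth_iff_birth_le[OF assms(2) i(1)] i(3) by simp
qed

lemma morse_matching_bnd:
  "morse_matching K (bnd K) (critical Ks) (\<lambda>\<tau> \<sigma>. regular_pair Ks \<sigma> \<tau>) (birth Ks) card"
proof
  show "finite K"
    using simplicial_complex_K by (simp add: simplicial_complex_def)
  show "bnd K \<sigma> \<subseteq> K" for \<sigma>
    by (auto simp: bnd_def)
  show "lin_ext (bnd K) (bnd K \<sigma>) = {}" if "\<sigma> \<in> K" for \<sigma>
    using simplicial_complex_K that by (rule lin_ext_bnd_bnd)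
  show "critical Ks \<sigma> \<or> (\<exists>\<rho>. regular_pair Ks \<rho> \<sigma>) \<or> (\<exists>\<tau>. regular_pair Ks \<sigma> \<tau>)" if "\<sigma> \<in> K" for \<sigma>
    using simplex_cases[OF that] unfolding lower_regular_def upper_regular_def by blast
  fix \<sigma> \<tau>
  assume pair: "regular_pair Ks \<sigma> \<tau>"
  note simplices = regular_pair_simplices[OF pair]
  show "\<tau> \<in> K" "\<sigma> \<in> bnd K \<tau>" "\<tau> \<noteq> \<sigma>"
    using simplices by (auto simp: bnd_def)
  show "\<not> critical Ks \<tau> \<and> \<not> critical Ks \<sigma>"
    using critical_not_regular_pair pair by blast
  show "birth Ks \<rho> < birth Ks \<sigma>" if "\<rho> \<in> bnd K \<tau>" "\<rho> \<noteq> \<sigma>" for \<rho>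
    using birth_face_less[OF pair] that by (simp add: bnd_def)
  show "card \<rho> = card \<sigma>" if "\<rho> \<in> bnd K \<tau>" for \<rho>
    using simplices that by (simp add: bnd_def)
  show "\<tau> = \<tau>' \<and> \<sigma> = \<sigma>'" if "regular_pair Ks \<sigma>' \<tau>'" "{\<tau>, \<sigma>} \<inter> {\<tau>', \<sigma>'} \<noteq> {}" for \<sigma>' \<tau>'
    using regular_pair_unique[OF pair that(1)] that(2) by (simp add: insert_commute)
qed

lemma morse_matching_cobnd:
  "morse_matching K (cobnd K) (critical Ks) (regular_pair Ks) (\<lambda>\<sigma>. length Ks - birth Ks \<sigma>) card"
proof
  show "finite K"
    using simplicial_complex_K by (simp add: simplicial_complex_def)
  show "cobnd K \<sigma> \<subseteq> K" for \<sigma>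
    by (auto simp: cobnd_def)
  show "lin_ext (cobnd K) (cobnd K \<sigma>) = {}" if "\<sigma> \<in> K" for \<sigma>
    using simplicial_complex_K that by (rule lin_ext_cobnd_cobnd)
  show "critical Ks \<sigma> \<or> (\<exists>\<tau>. regular_pair Ks \<sigma> \<tau>) \<or> (\<exists>\<rho>. regular_pair Ks \<rho> \<sigma>)" if "\<sigma> \<in> K" for \<sigma>
    using simplex_cases[OF that] unfolding lower_regular_def upper_regular_def by blast
  fix \<sigma> \<tau>
  assume pair: "regular_pair Ks \<sigma> \<tau>"
  note simplices = regular_pair_simplices[OF pair]
  show "\<sigma> \<in> K" "\<tau> \<in> cobnd K \<sigma>" "\<sigma> \<noteq> \<tau>"
    using simplices by (auto simp: cobnd_def)
  show "\<not> critical Ks \<sigma> \<and> \<not> critical Ks \<tau>"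
    using critical_not_regular_pair pair by blast
  show "length Ks - birth Ks \<rho> < length Ks - birth Ks \<tau>" if "\<rho> \<in> cobnd K \<sigma>" "\<rho> \<noteq> \<tau>" for \<rho>
  proof -
    have "\<rho> \<in> K" "\<sigma> \<subset> \<rho>"
      using that(1) by (simp_all add: cobnd_def)
    then show ?thesis
      using birth_coface_greater[OF pair _ _ that(2)] birth_step(3)[of \<rho>] by linarith
  qed
  show "card \<rho> = card \<tau>" if "\<rho> \<in> cobnd K \<sigma>" for \<rho>
    using simplices that by (simp add: cobnd_def)
  show "\<sigma> = \<sigma>' \<and> \<tau> = \<tau>'" if "regular_pair Ks \<sigma>' \<tau>'" "{\<sigma>, \<tau>} \<inter> {\<sigma>', \<tau>'} \<noteq> {}" for \<sigma>' \<tau>'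
    using regular_pair_unique[OF pair that] .
qed

lemma crit_chains_iff:
  assumes "\<sigma> \<in> K"
  shows "X \<in> crit_chains K Ks (card \<sigma> - 1) \<longleftrightarrow> X \<subseteq> {\<rho> \<in> K. critical Ks \<rho> \<and> card \<rho> = card \<sigma>}"
proof -
  have "card \<sigma> \<noteq> 0"
    using simplicial_complex_K assms by (simp add: simplicial_complex_def)
  then show ?thesis
    unfolding crit_chains_def simplices_of_dim_def critical_set_def by auto
qed

lemma ball_crit_chains_iff:
  "(\<forall>\<sigma>\<in>K. f \<sigma> \<in> crit_chains K Ks (card \<sigma> - 1)) \<longleftrightarrow>
    (\<forall>\<sigma>\<in>K. f \<sigma> \<subseteq> {\<rho> \<in> K. critical Ks \<rho> \<and> card \<rho> = card \<sigma>})"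
  using crit_chains_iff by blast

lemma reference_map_eq:
  "reference_map K Ks = morse_matching.reference K (bnd K) (critical Ks) (\<lambda>\<tau> \<sigma>. regular_pair Ks \<sigma> \<tau>) (birth Ks)"
proof -
  interpret morse_matching K "bnd K" "critical Ks" "\<lambda>\<tau> \<sigma>. regular_pair Ks \<sigma> \<tau>" "birth Ks" card
    by (rule morse_matching_bnd)
  have "is_reference_map K Ks = is_reference"
    unfolding is_reference_map_def is_reference_def upper_regular_def ball_crit_chains_iff ..
  then show ?thesis
    unfolding reference_map_def by (simp add: the_is_reference)
qed

lemma coreference_map_eq:
  "coreference_map K Ks =
    morse_matching.reference K (cobnd K) (critical Ks) (regular_pair Ks) (\<lambda>\<sigma>. length Ks - birth Ks \<sigma>)"
proof -
  interpret morse_matching K "cobnd K" "critical Ks" "regular_pair Ks" "\<lambda>\<sigma>. length Ks - birth Ks \<sigma>" card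
    by (rule morse_matching_cobnd)
  have "is_coreference_map K Ks = is_reference"
    unfolding is_coreference_map_def is_reference_def lower_regular_def ball_crit_chains_iff ..
  then show ?thesis
    unfolding coreference_map_def by (simp add: the_is_reference)
qed

end

theorem proposition7:
  fixes K :: "'v set set" and Ks :: "'v set set list"
  assumes "morse_sequence K Ks"
  shows "\<forall>p. (\<forall>c \<in> crit_chains K Ks (p + 1). morse_bnd K Ks (morse_bnd K Ks c) = {}) \<and>
             (\<forall>c \<in> crit_chains K Ks p. morse_cobnd K Ks (morse_cobnd K Ks c) = {})"
proof (intro allI conjI ballI)
  interpret boundary: morse_matching K "bnd K" "critical Ks" "\<lambda>\<tau> \<sigma>. regular_pair Ks \<sigma> \<tau>" "birth Ks" card
    using assms by (rule morse_matching_bnd)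
  interpret coboundary: morse_matching K "cobnd K" "critical Ks" "regular_pair Ks"
      "\<lambda>\<sigma>. length Ks - birth Ks \<sigma>" card
    using assms by (rule morse_matching_cobnd)
  have chains_in_K: "c \<subseteq> K" if "c \<in> crit_chains K Ks q" for c q
    using that by (auto simp: crit_chains_def simplices_of_dim_def)
  fix p c
  show "morse_bnd K Ks (morse_bnd K Ks c) = {}" if "c \<in> crit_chains K Ks (p + 1)"
    unfolding morse_bnd_def reference_map_eq[OF assms]
    using chains_in_K[OF that] by (rule boundary.reference_d_reference_d)
  show "morse_cobnd K Ks (morse_cobnd K Ks c) = {}" if "c \<in> crit_chains K Ks p"
    unfolding morse_cobnd_def coreference_map_eq[OF assms]
    using chains_in_K[OF that] by (rule coboundary.reference_d_reference_d)
qed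

end
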